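(* Let $\beta=\prod_{j=1}^{r}\sigma_1^{a_j}\sigma_2^{b_j}\in B_3$ with $r\ge 2$ and all $a_j,b_j\ge 1$. Suppose either (1) $\beta$ has two or more trivial syllables, or (2) $\beta$ has a trivial syllable whose two adjacent syllables (taken cyclically, so that $\sigma_1^{a_1}$ and $\sigma_2^{b_r}$ are adjacent) have minimum exponent equal to $2$. Then $\beta$ is conjugate to $[1,3]^{3a}\gamma$ for some integer $a\ge 0$ and some $\gamma\in B_3$ with $\rho(\gamma)<r$. In case (2), or when $\beta$ has two isolated trivial syllables, one has $a\ge 1$. Moreover, $\gamma$ may be chosen as $\gamma=\prod_{j=1}^{s}\sigma_1^{c_j}\sigma_2^{d_j}$ with $s<r$ and $c_j,d_j\ge 2$ for all $j\ge 2$, where: if $s\ge 2$ then $c_1,d_1\ge 1$ and $\gamma$ may be chosen to have either no trivial syllables, or exactly one trivial syllable whose two adjacent syllables each have exponent at least three; if $s=1$ then $c_1,d_1\ge 0$; and if $s=0$ then $\gamma=1$.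
   Context: $B_3$ is the 3-strand braid group with generators $\sigma_1,\sigma_2$; $[1,3]=\sigma_1\sigma_2$. For a word $\beta=\prod_{j=1}^{r}\sigma_1^{e_{2j-1}}\sigma_2^{e_{2j}}$ with $r\ge 1$ and all $e_k\neq 0$, each factor $\sigma_i^{e_k}$ is a syllable; a syllable is trivial if its exponent is $1$; a trivial syllable is isolated if both adjacent syllables (viewed cyclically) are non-trivial. The rank of such $\beta$ is $\rho(\beta)=r$; the identity has rank $0$ and $\sigma_i^a$ ($a\neq 0$) has rank $1$. *)

theory Defs
  imports Main
begin

text \<open>The braid group B_3 via its presentation: words in the letters sigma_i^{+-1}
  modulo free reduction and the braid relation s1 s2 s1 = s2 s1 s2.\<close>

datatype gen = S1 | S2

type_synonym bword = "(gen \<times> bool) list"  (* (generator, True = positive letter) *)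

inductive beq :: "bword \<Rightarrow> bword \<Rightarrow> bool" where
  beq_refl: "beq w w"
| beq_sym: "beq u v \<Longrightarrow> beq v u"
| beq_trans: "beq u v \<Longrightarrow> beq v w \<Longrightarrow> beq u w"
| beq_free: "beq (u @ [(g, b), (g, \<not> b)] @ v) (u @ v)"
| beq_braid: "beq (u @ [(S1, True), (S2, True), (S1, True)] @ v)
                  (u @ [(S2, True), (S1, True), (S2, True)] @ v)"

definition winv :: "bword \<Rightarrow> bword" where
  "winv w = rev (map (\<lambda>(g, b). (g, \<not> b)) w)"

definition conj_B3 :: "bword \<Rightarrow> bword \<Rightarrow> bool" where
  "conj_B3 u v \<longleftrightarrow> (\<exists>w. beq (w @ u @ winv w) v)"

definition sig_pow :: "gen \<Rightarrow> nat \<Rightarrow> bword" where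
  "sig_pow g n = replicate n (g, True)"

text \<open>[1,3]^(3a) = (sigma_1 sigma_2)^(3a)\<close>
definition delta13_pow :: "nat \<Rightarrow> bword" where
  "delta13_pow n = concat (replicate n [(S1, True), (S2, True)])"

definition word_of :: "(nat \<times> nat) list \<Rightarrow> bword" where
  "word_of ps = concat (map (\<lambda>(x, y). sig_pow S1 x @ sig_pow S2 y) ps)"

definition syl :: "(nat \<times> nat) list \<Rightarrow> nat list" where
  "syl ps = concat (map (\<lambda>(x, y). [x, y]) ps)"

definition nxt :: "nat list \<Rightarrow> nat \<Rightarrow> nat" where
  "nxt e k = e ! ((k + 1) mod length e)"

definition prv :: "nat list \<Rightarrow> nat \<Rightarrow> nat" where
  "prv e k = e ! ((k + length e - 1) mod length e)"

definition trivial_syls :: "(nat \<times> nat) list \<Rightarrow> nat set" where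
  "trivial_syls ps = {k. k < length (syl ps) \<and> syl ps ! k = 1}"

definition isolated_trivial_syls :: "(nat \<times> nat) list \<Rightarrow> nat set" where
  "isolated_trivial_syls ps = {k \<in> trivial_syls ps. prv (syl ps) k \<noteq> 1 \<and> nxt (syl ps) k \<noteq> 1}"

end

theory Submission
  imports Defs "HOL-Library.Multiset"
begin

text \<open>
  Read \<open>\<beta>\<close> as a cyclic sequence of syllable exponents and let
  \<open>\<Delta> = \<sigma>\<^sub>1\<sigma>\<^sub>2\<sigma>\<^sub>1\<close>; conjugation by \<open>\<Delta>\<close> swaps
  the generators and \<open>\<Delta>\<^sup>2 = [1,3]\<^sup>3\<close> is central. A trivial syllable between
  \<open>\<sigma>\<^sub>1\<^sup>x\<close> and \<open>\<sigma>\<^sub>1\<^sup>y\<close> is absorbed into a half twist,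
  \<open>\<sigma>\<^sub>1\<^sup>x \<sigma>\<^sub>2 \<sigma>\<^sub>1\<^sup>y = \<Delta> \<sigma>\<^sub>2\<^sup>x\<^sup>-\<^sup>1 \<sigma>\<^sub>1\<^sup>y\<^sup>-\<^sup>1\<close>,
  replacing three syllables by two. If a trivial syllable remains afterwards (there was a second
  one, or a neighbouring exponent 2 has dropped to 1), a second absorption produces
  \<open>\<Delta>\<^sup>2\<close>, i.e. a factor \<open>[1,3]\<^sup>3\<close>. Two adjacent trivial syllables slide,
  \<open>\<sigma>\<^sub>1\<^sup>x \<sigma>\<^sub>2\<sigma>\<^sub>1 = \<sigma>\<^sub>2\<sigma>\<^sub>1 \<sigma>\<^sub>2\<^sup>x\<close>, leaving an empty
  syllable whose neighbours merge. Each move shortens the cyclic word by two syllables; when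
  none applies, at most one trivial syllable is left and its neighbours have exponent at least 3.
\<close>

lemma beq_context: "beq u v \<Longrightarrow> beq (x @ u @ y) (x @ v @ y)"
proof (induction rule: beq.induct)
  case (beq_refl w)
  show ?case by (rule beq.beq_refl)
next
  case (beq_sym u v)
  show ?case by (rule beq.beq_sym[OF beq_sym.IH])
next
  case (beq_trans u v w)
  show ?case by (rule beq.beq_trans[OF beq_trans.IH])
next
  case (beq_free u g b v)
  show ?case using beq.beq_free[of "x @ u" g b "v @ y"] by simp
next
  case (beq_braid u v)
  show ?case using beq.beq_braid[of "x @ u" "v @ y"] by simp
qed

declare beq_trans [trans]

lemma beq_append_left: "beq v v' \<Longrightarrow> beq (u @ v) (u @ v')"
  using beq_context[of v v' u "[]"] by simp

lemma beq_append_right: "beq u u' \<Longrightarrow> beq (u @ v) (u' @ v)"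
  using beq_context[of u u' "[]" v] by simp

lemma winv_Nil [simp]: "winv [] = []"
  by (simp add: winv_def)

lemma winv_append [simp]: "winv (u @ v) = winv v @ winv u"
  by (simp add: winv_def)

lemma winv_Cons [simp]: "winv ((g, b) # w) = winv w @ [(g, \<not> b)]"
  by (simp add: winv_def)

lemma beq_append_winv: "beq (w @ winv w) []"
proof (induction w)
  case Nil
  show ?case by (simp add: beq_refl)
next
  case (Cons a w)
  obtain g b where a: "a = (g, b)" by fastforce
  have "beq ((g, b) # w @ winv w @ [(g, \<not> b)]) [(g, b), (g, \<not> b)]"
    using beq_context[OF Cons.IH, of "[(g, b)]" "[(g, \<not> b)]"] by simp
  also have "beq [(g, b), (g, \<not> b)] []"
    using beq_free[of "[]" g b "[]"] by simp
  finally show ?case using a by simp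
qed

lemma conj_B3_refl: "conj_B3 u u"
  unfolding conj_B3_def by (rule exI[of _ "[]"]) (simp add: beq_refl)

lemma conj_B3_if_beq: "beq u v \<Longrightarrow> conj_B3 u v"
  unfolding conj_B3_def by (rule exI[of _ "[]"]) simp

lemma conj_B3_trans [trans]: "conj_B3 u v \<Longrightarrow> conj_B3 v w \<Longrightarrow> conj_B3 u w"
proof -
  assume "conj_B3 u v" "conj_B3 v w"
  then obtain x y where x: "beq (x @ u @ winv x) v" and y: "beq (y @ v @ winv y) w"
    unfolding conj_B3_def by blast
  have "beq (y @ (x @ u @ winv x) @ winv y) (y @ v @ winv y)"
    by (rule beq_context[OF x])
  then have "beq ((y @ x) @ u @ winv (y @ x)) w"
    using y by (simp add: beq_trans)
  then show ?thesis unfolding conj_B3_def by blast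
qed

lemma conj_B3_beq_trans [trans]: "conj_B3 u v \<Longrightarrow> beq v w \<Longrightarrow> conj_B3 u w"
  using conj_B3_trans conj_B3_if_beq by blast

lemma conj_B3_if_intertwined:
  assumes "beq (w @ u) (v @ w)"
  shows "conj_B3 u v"
proof -
  have "beq ((w @ u) @ winv w) ((v @ w) @ winv w)"
    by (rule beq_append_right[OF assms])
  also have "beq ((v @ w) @ winv w) (v @ [])"
    using beq_append_left[OF beq_append_winv[of w], of v] by simp
  finally show ?thesis
    unfolding conj_B3_def by (intro exI[of _ w]) simp
qed

lemma conj_B3_append_swap: "conj_B3 (x @ y) (y @ x)"
  by (rule conj_B3_if_intertwined[of y]) (simp add: beq_refl)

lemma conj_B3_prefix_central:
  assumes central: "\<And>u. beq (z @ u) (u @ z)" and "conj_B3 u v"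
  shows "conj_B3 (z @ u) (z @ v)"
proof -
  obtain w where w: "beq (w @ u @ winv w) v"
    using \<open>conj_B3 u v\<close> unfolding conj_B3_def by blast
  have "beq (w @ (z @ u) @ winv w) (z @ (w @ u @ winv w))"
    using beq_append_right[OF beq_sym[OF central[of w]], of "u @ winv w"] by simp
  also have "beq (z @ (w @ u @ winv w)) (z @ v)"
    by (rule beq_append_left[OF w])
  finally show ?thesis
    unfolding conj_B3_def by blast
qed

section \<open>The half twist\<close>

fun swap_gen :: "gen \<Rightarrow> gen" where
  "swap_gen S1 = S2"
| "swap_gen S2 = S1"

lemma swap_gen_swap_gen [simp]: "swap_gen (swap_gen g) = g"
  by (cases g) auto

lemma funpow_swap_gen: "(swap_gen ^^ n) g = (if even n then g else swap_gen g)"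
  by (induction n) auto

definition swap_gens :: "bword \<Rightarrow> bword" where
  "swap_gens w = map (\<lambda>(g, b). (swap_gen g, b)) w"

lemma swap_gens_Nil [simp]: "swap_gens [] = []"
  by (simp add: swap_gens_def)

lemma swap_gens_append [simp]: "swap_gens (u @ v) = swap_gens u @ swap_gens v"
  by (simp add: swap_gens_def)

lemma swap_gens_swap_gens [simp]: "swap_gens (swap_gens w) = w"
  by (induction w) (auto simp: swap_gens_def)

lemma swap_gens_sig_pow [simp]: "swap_gens (sig_pow g n) = sig_pow (swap_gen g) n"
  by (simp add: swap_gens_def sig_pow_def)

definition half_twist :: bword where
  "half_twist = [(S1, True), (S2, True), (S1, True)]"

lemma beq_letter_half_twist:
  "beq ([(g, b)] @ half_twist) (half_twist @ [(swap_gen g, b)])"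
proof -
  have positive: "beq ([(h, True)] @ half_twist) (half_twist @ [(swap_gen h, True)])" for h
    using beq_braid[of "[(S1, True)]" "[]"] beq_sym[OF beq_braid[of "[]" "[(S1, True)]"]]
    by (cases h) (simp_all add: half_twist_def)
  show ?thesis
  proof (cases b)
    case True
    then show ?thesis using positive by simp
  next
    case False
    let ?h = "swap_gen g"
    have "beq ([(g, False)] @ half_twist)
              (([(g, False)] @ half_twist) @ [(?h, True), (?h, \<not> True)] @ [])"
      using beq_sym[OF beq_free[of "[(g, False)] @ half_twist" ?h True "[]"]] by simp
    also have "beq (([(g, False)] @ half_twist) @ [(?h, True), (?h, \<not> True)] @ [])
                   ([(g, False)] @ ([(g, True)] @ half_twist) @ [(?h, False)])"
      using beq_context[OF beq_sym[OF positive[of g]], of "[(g, False)]" "[(?h, False)]"] by simp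
    also have "beq ([(g, False)] @ ([(g, True)] @ half_twist) @ [(?h, False)])
                   ([] @ half_twist @ [(?h, False)])"
      using beq_free[of "[]" g False "half_twist @ [(?h, False)]"] by simp
    finally show ?thesis using False by simp
  qed
qed

lemma beq_append_half_twist: "beq (w @ half_twist) (half_twist @ swap_gens w)"
proof (induction w)
  case Nil
  show ?case by (simp add: beq_refl)
next
  case (Cons a w)
  obtain g b where a: "a = (g, b)" by fastforce
  have "beq ([a] @ w @ half_twist) ([a] @ half_twist @ swap_gens w)"
    by (rule beq_append_left[OF Cons.IH])
  also have "beq ([a] @ half_twist @ swap_gens w) (half_twist @ [(swap_gen g, b)] @ swap_gens w)"
    using beq_append_right[OF beq_letter_half_twist[of g b]] a by simp
  finally show ?case using a by (simp add: swap_gens_def)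
qed

lemma beq_half_twist_sq_commute:
  "beq (half_twist @ half_twist @ u) (u @ half_twist @ half_twist)"
proof -
  have "beq (u @ half_twist @ half_twist) (half_twist @ swap_gens u @ half_twist)"
    using beq_append_right[OF beq_append_half_twist[of u], of half_twist] by simp
  also have "beq (half_twist @ swap_gens u @ half_twist) (half_twist @ half_twist @ u)"
    using beq_append_left[OF beq_append_half_twist[of "swap_gens u"], of half_twist] by simp
  finally show ?thesis by (rule beq_sym)
qed

lemma beq_delta13_pow_3: "beq (delta13_pow 3) (half_twist @ half_twist)"
  using beq_braid[of "[(S1, True), (S2, True), (S1, True)]" "[]"]
  by (simp add: delta13_pow_def half_twist_def numeral_eq_Suc beq_sym)

lemma beq_delta13_pow_3_commute: "beq (delta13_pow 3 @ u) (u @ delta13_pow 3)"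
proof -
  have "beq (delta13_pow 3 @ u) ((half_twist @ half_twist) @ u)"
    by (rule beq_append_right[OF beq_delta13_pow_3])
  also have "beq ((half_twist @ half_twist) @ u) (u @ (half_twist @ half_twist))"
    using beq_half_twist_sq_commute by simp
  also have "beq (u @ (half_twist @ half_twist)) (u @ delta13_pow 3)"
    by (rule beq_append_left[OF beq_sym[OF beq_delta13_pow_3]])
  finally show ?thesis .
qed

lemma delta13_pow_3_Suc: "delta13_pow (3 * Suc a) = delta13_pow 3 @ delta13_pow (3 * a)"
  by (simp add: delta13_pow_def replicate_add)

section \<open>Twisted alternating words\<close>

fun alt_word :: "gen \<Rightarrow> nat list \<Rightarrow> bword" where
  "alt_word g [] = []"
| "alt_word g (x # xs) = sig_pow g x @ alt_word (swap_gen g) xs"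

definition half_twist_pow :: "nat \<Rightarrow> bword" where
  "half_twist_pow k = concat (replicate k half_twist)"

definition twisted_word :: "nat \<Rightarrow> nat list \<Rightarrow> bword" where
  "twisted_word k d = half_twist_pow k @ alt_word S1 d"

lemma twisted_word_0 [simp]: "twisted_word 0 d = alt_word S1 d"
  by (simp add: twisted_word_def half_twist_pow_def)

lemma half_twist_pow_Suc: "half_twist_pow (Suc k) = half_twist @ half_twist_pow k"
  by (simp add: half_twist_pow_def)

lemma half_twist_pow_commute: "half_twist @ half_twist_pow k @ w = half_twist_pow k @ half_twist @ w"
proof -
  have "half_twist @ half_twist_pow k = half_twist_pow k @ half_twist"
    by (induction k) (simp_all add: half_twist_pow_def)
  then show ?thesis by (metis append_assoc)
qed

lemma swap_gens_alt_word [simp]: "swap_gens (alt_word g d) = alt_word (swap_gen g) d"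
  by (induction d arbitrary: g) auto

lemma alt_word_snoc:
  "alt_word g (d @ [x]) = alt_word g d @ sig_pow ((swap_gen ^^ length d) g) x"
  by (induction d arbitrary: g) (simp_all add: funpow_Suc_right del: funpow.simps)

lemma beq_alt_word_half_twist_pow:
  "beq (alt_word g d @ half_twist_pow k) (half_twist_pow k @ alt_word ((swap_gen ^^ k) g) d)"
proof (induction k arbitrary: g)
  case 0
  show ?case by (simp add: half_twist_pow_def beq_refl)
next
  case (Suc k)
  have "beq (alt_word g d @ half_twist @ half_twist_pow k)
            (half_twist @ alt_word (swap_gen g) d @ half_twist_pow k)"
    using beq_append_right[OF beq_append_half_twist[of "alt_word g d"], of "half_twist_pow k"] by simp
  also have "beq (half_twist @ alt_word (swap_gen g) d @ half_twist_pow k)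
                 (half_twist @ half_twist_pow k @ alt_word ((swap_gen ^^ k) (swap_gen g)) d)"
    by (rule beq_append_left[OF Suc.IH])
  finally show ?case
    by (simp add: half_twist_pow_Suc funpow_Suc_right del: funpow.simps)
qed

text \<open>Conjugating by \<open>\<Delta>\<close> shows that the starting generator does not matter.\<close>

lemma conj_B3_twisted_any_start: "conj_B3 (half_twist_pow k @ alt_word g d) (twisted_word k d)"
proof (cases g)
  case S1
  then show ?thesis by (simp add: twisted_word_def conj_B3_refl)
next
  case S2
  have "beq (half_twist @ half_twist_pow k @ alt_word S2 d) (half_twist_pow k @ half_twist @ alt_word S2 d)"
    by (simp add: half_twist_pow_commute beq_refl)
  also have "beq (half_twist_pow k @ half_twist @ alt_word S2 d)
                 (half_twist_pow k @ alt_word S1 d @ half_twist)"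
    using beq_append_left[OF beq_sym[OF beq_append_half_twist[of "alt_word S1 d"]]] by simp
  finally show ?thesis
    using S2 by (intro conj_B3_if_intertwined[of half_twist]) (simp add: twisted_word_def)
qed

text \<open>
  The parity hypothesis makes the syllable moved to the end carry the generator that the
  alternation requires there.
\<close>

lemma conj_B3_twisted_rotate1:
  assumes "even (length (x # d) + k)"
  shows "conj_B3 (twisted_word k (x # d)) (twisted_word k (d @ [x]))"
proof -
  let ?g = "(swap_gen ^^ k) S2"
  have last_gen: "(swap_gen ^^ length d) ?g = S1"
    using assms by (simp add: funpow_add[symmetric, unfolded comp_def] funpow_swap_gen)
  have "conj_B3 (twisted_word k (x # d)) (alt_word S2 d @ half_twist_pow k @ sig_pow S1 x)"
    using conj_B3_append_swap[of "half_twist_pow k @ sig_pow S1 x" "alt_word S2 d"]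
    by (simp add: twisted_word_def)
  also have "beq (alt_word S2 d @ half_twist_pow k @ sig_pow S1 x)
                 (half_twist_pow k @ alt_word ?g d @ sig_pow S1 x)"
    using beq_append_right[OF beq_alt_word_half_twist_pow[of S2 d k], of "sig_pow S1 x"] by simp
  also have "half_twist_pow k @ alt_word ?g d @ sig_pow S1 x = half_twist_pow k @ alt_word ?g (d @ [x])"
    by (simp add: alt_word_snoc last_gen)
  also have "conj_B3 \<dots> (twisted_word k (d @ [x]))"
    by (rule conj_B3_twisted_any_start)
  finally show ?thesis .
qed

lemma conj_B3_twisted_rotate:
  assumes "even (length d + k)"
  shows "conj_B3 (twisted_word k d) (twisted_word k (rotate m d))"
proof (induction m)
  case 0
  show ?case by (simp add: conj_B3_refl)
next
  case (Suc m)
  have "conj_B3 (twisted_word k (rotate m d)) (twisted_word k (rotate1 (rotate m d)))"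
  proof (cases "rotate m d")
    case Nil
    then show ?thesis by (simp add: conj_B3_refl)
  next
    case (Cons x xs)
    then have "even (length (x # xs) + k)"
      using assms by (metis length_rotate)
    then show ?thesis using conj_B3_twisted_rotate1 Cons by simp
  qed
  then show ?case using conj_B3_trans[OF Suc.IH] by simp
qed

section \<open>Moves on exponent lists\<close>

lemma sig_pow_0 [simp]: "sig_pow g 0 = []"
  by (simp add: sig_pow_def)

lemma sig_pow_Suc: "sig_pow g (Suc n) = (g, True) # sig_pow g n"
  by (simp add: sig_pow_def)

lemma sig_pow_Suc_right: "sig_pow g (Suc n) = sig_pow g n @ [(g, True)]"
  by (simp add: sig_pow_def replicate_append_same)

lemma sig_pow_add: "sig_pow g (m + n) = sig_pow g m @ sig_pow g n"
  by (simp add: sig_pow_def replicate_add)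

lemma conj_B3_twisted_reduce:
  assumes "1 \<le> x" "1 \<le> y"
  shows "conj_B3 (twisted_word k (x # 1 # y # d)) (twisted_word (Suc k) ((x - 1) # (y - 1) # d))"
proof -
  obtain x' y' where xy: "x = Suc x'" "y = Suc y'"
    using assms by (cases x; cases y) auto
  have "twisted_word k (x # 1 # y # d)
      = half_twist_pow k @ (sig_pow S1 x' @ half_twist) @ (sig_pow S1 y' @ alt_word S2 d)"
    unfolding twisted_word_def xy alt_word.simps sig_pow_Suc_right[of S1 x'] sig_pow_Suc[of S1 y']
    by (simp add: half_twist_def sig_pow_def)
  also have "beq \<dots> (half_twist_pow k @ (half_twist @ sig_pow S2 x') @ (sig_pow S1 y' @ alt_word S2 d))"
    using beq_context[OF beq_append_half_twist[of "sig_pow S1 x'"]] by simp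
  also have "\<dots> = half_twist_pow (Suc k) @ alt_word S2 (x' # y' # d)"
    by (simp add: half_twist_pow_Suc half_twist_pow_commute)
  finally have "conj_B3 (twisted_word k (x # 1 # y # d)) (half_twist_pow (Suc k) @ alt_word S2 (x' # y' # d))"
    by (rule conj_B3_if_beq)
  also have "conj_B3 \<dots> (twisted_word (Suc k) (x' # y' # d))"
    by (rule conj_B3_twisted_any_start)
  finally show ?thesis using xy by simp
qed

lemma beq_sig_pow_slide:
  "beq (sig_pow S1 x @ [(S2, True), (S1, True)]) ([(S2, True), (S1, True)] @ sig_pow S2 x)"
proof (induction x)
  case 0
  show ?case by (simp add: beq_refl)
next
  case (Suc x)
  have "beq ([(S1, True)] @ sig_pow S1 x @ [(S2, True), (S1, True)])
            ([(S1, True)] @ [(S2, True), (S1, True)] @ sig_pow S2 x)"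
    by (rule beq_append_left[OF Suc.IH])
  also have "beq \<dots> ([(S2, True), (S1, True)] @ sig_pow S2 (Suc x))"
    using beq_braid[of "[]" "sig_pow S2 x"] by (simp add: sig_pow_Suc)
  finally show ?case by (simp add: sig_pow_Suc)
qed

lemma beq_twisted_slide:
  "beq (twisted_word k (x # 1 # 1 # y # d)) (twisted_word k (0 # 1 # 1 # (x + y) # d))"
  using beq_context[OF beq_sig_pow_slide[of x], of "half_twist_pow k" "sig_pow S2 y @ alt_word S1 d"]
  by (simp add: twisted_word_def sig_pow_add sig_pow_Suc)

lemma twisted_word_merge: "twisted_word k (x # 0 # y # d) = twisted_word k ((x + y) # d)"
  by (simp add: twisted_word_def sig_pow_add)

lemma mset_rotate: "mset (rotate n xs) = mset xs"
proof (induction n)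
  case (Suc n)
  then show ?case by (cases "rotate n xs") simp_all
qed simp

lemma prv_in_set: "d \<noteq> [] \<Longrightarrow> prv d j \<in> set d"
  by (simp add: prv_def)

lemma nxt_in_set: "d \<noteq> [] \<Longrightarrow> nxt d j \<in> set d"
  by (simp add: nxt_def)

lemma rotate_window:
  assumes "j < length d" "3 \<le> length d"
  obtains m rest where "rotate m d = prv d j # d ! j # nxt d j # rest"
proof -
  let ?n = "length d"
  have "d \<noteq> []" using assms by auto
  define e where "e = rotate (j + ?n - 1) d"
  have e_nth: "e ! i = d ! ((j + ?n - 1 + i) mod ?n)" if "i < ?n" for i
    using that by (simp add: e_def nth_rotate)
  have "e ! 0 = prv d j"
    using e_nth[of 0] \<open>d \<noteq> []\<close> by (simp add: prv_def)
  moreover have "j + ?n - 1 + 1 = j + ?n"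
    using assms by simp
  then have "e ! 1 = d ! j"
    using e_nth[of 1] assms by simp
  moreover have "(j + ?n - 1 + 2) mod ?n = (j + 1) mod ?n"
  proof -
    have "j + ?n - 1 + 2 = (j + 1) + ?n"
      using assms by simp
    then show ?thesis by (simp only: mod_add_self2)
  qed
  then have "e ! 2 = nxt d j"
    using e_nth[of 2] assms unfolding nxt_def by simp
  moreover have "3 \<le> length e"
    using assms by (simp add: e_def)
  then have "e = e ! 0 # e ! 1 # e ! 2 # drop 3 e"
    by (cases e; cases "tl e"; cases "tl (tl e)") auto
  ultimately show ?thesis
    using that[of "j + ?n - 1" "drop 3 e"] by (simp add: e_def)
qed

lemma conj_B3_twisted_reduce_at:
  assumes "even (length d + k)" "3 \<le> length d" "j < length d" "d ! j = 1"
    and "1 \<le> prv d j" "1 \<le> nxt d j"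
  obtains rest
  where "conj_B3 (twisted_word k d) (twisted_word (Suc k) ((prv d j - 1) # (nxt d j - 1) # rest))"
    and "mset d = {#prv d j, 1, nxt d j#} + mset rest"
proof -
  obtain m rest where e: "rotate m d = prv d j # 1 # nxt d j # rest"
    using rotate_window[OF assms(3,2)] assms(4) by metis
  have "conj_B3 (twisted_word k d) (twisted_word k (rotate m d))"
    by (rule conj_B3_twisted_rotate[OF assms(1)])
  also have "conj_B3 \<dots> (twisted_word (Suc k) ((prv d j - 1) # (nxt d j - 1) # rest))"
    unfolding e by (rule conj_B3_twisted_reduce[OF assms(5,6)])
  finally show ?thesis
    using that mset_rotate[of m d] e by simp
qed

lemma zero_merge_move:
  assumes "even (length c + k)" "3 \<le> length c" "0 \<in> set c"
  obtains d where "conj_B3 (twisted_word k c) (twisted_word k d)" "length d + 2 = length c"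
proof -
  obtain j where j: "j < length c" "c ! j = 0"
    using assms(3) by (metis in_set_conv_nth)
  obtain m rest where e: "rotate m c = prv c j # 0 # nxt c j # rest"
    using rotate_window[OF j(1) assms(2)] j(2) by metis
  have "conj_B3 (twisted_word k c) (twisted_word k (rotate m c))"
    by (rule conj_B3_twisted_rotate[OF assms(1)])
  also have "twisted_word k (rotate m c) = twisted_word k ((prv c j + nxt c j) # rest)"
    unfolding e by (rule twisted_word_merge)
  finally show ?thesis
    using that arg_cong[OF e, of length] by simp
qed

lemma adjacent_trivials_move:
  assumes "even (length c + k)" "4 \<le> length c" "j < length c" "c ! j = 1" "nxt c j = 1"
  obtains d where "conj_B3 (twisted_word k c) (twisted_word k d)" "length d + 2 = length c"
proof -
  obtain m rest where e: "rotate m c = prv c j # 1 # 1 # rest"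
    using rotate_window[of j c] assms by auto
  have "rest \<noteq> []"
    using assms(2) arg_cong[OF e, of length] by auto
  then obtain y rest' where rest: "rest = y # rest'"
    by (cases rest) auto
  let ?c' = "0 # 1 # 1 # (prv c j + y) # rest'"
  have "conj_B3 (twisted_word k c) (twisted_word k (rotate m c))"
    by (rule conj_B3_twisted_rotate[OF assms(1)])
  also have "beq (twisted_word k (rotate m c)) (twisted_word k ?c')"
    unfolding e rest by (rule beq_twisted_slide)
  finally have slid: "conj_B3 (twisted_word k c) (twisted_word k ?c')" .
  have "length ?c' = length c"
    using arg_cong[OF e, of length] rest by simp
  then have "even (length ?c' + k)" "3 \<le> length ?c'" "0 \<in> set ?c'"
    using assms(1,2) by simp_all
  then obtain d where d: "conj_B3 (twisted_word k ?c') (twisted_word k d)" "length d + 2 = length ?c'"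
    by (rule zero_merge_move)
  show ?thesis
    using that[OF conj_B3_trans[OF slid d(1)]] d(2) \<open>length ?c' = length c\<close> by simp
qed

definition trivial_positions :: "nat list \<Rightarrow> nat set" where
  "trivial_positions c = {k. k < length c \<and> c ! k = 1}"

lemma finite_trivial_positions: "finite (trivial_positions c)"
  by (simp add: trivial_positions_def)

lemma count_1_eq_card_trivial_positions: "count (mset c) 1 = card (trivial_positions c)"
proof -
  have "{i. i < length c \<and> 1 = c ! i} = trivial_positions c"
    by (auto simp: trivial_positions_def)
  then show ?thesis
    by (simp add: count_mset count_list_eq_length_filter length_filter_conv_card)
qed

text \<open>The reduction can be applied twice in a row here: the first one leaves a trivial syllable.\<close>

definition full_twist_site :: "nat list \<Rightarrow> nat \<Rightarrow> bool" where
  "full_twist_site c j \<longleftrightarrow> j \<in> trivial_positions c \<and> 2 \<le> prv c j \<and> 2 \<le> nxt c j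
      \<and> (prv c j = 2 \<or> nxt c j = 2 \<or> 2 \<le> card (trivial_positions c))"

lemma full_twist_site_if_min_2:
  "j \<in> trivial_positions c \<Longrightarrow> min (prv c j) (nxt c j) = 2 \<Longrightarrow> full_twist_site c j"
  by (auto simp: full_twist_site_def min_def split: if_splits)

lemma full_twist_site_if_isolated:
  assumes "\<forall>x\<in>set c. 1 \<le> x" "2 \<le> card {k \<in> trivial_positions c. prv c k \<noteq> 1 \<and> nxt c k \<noteq> 1}"
  shows "\<exists>j. full_twist_site c j"
proof -
  let ?I = "{k \<in> trivial_positions c. prv c k \<noteq> 1 \<and> nxt c k \<noteq> 1}"
  have "?I \<noteq> {}"
    using assms(2) by (metis card.empty not_numeral_le_zero)
  then obtain j where j: "j \<in> ?I"
    by blast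
  have "?I \<subseteq> trivial_positions c"
    by blast
  then have "2 \<le> card (trivial_positions c)"
    using assms(2) card_mono[OF finite_trivial_positions] by (meson order_trans)
  moreover have "c \<noteq> []"
    using j by (auto simp: trivial_positions_def)
  then have "1 \<le> prv c j" "1 \<le> nxt c j"
    using assms(1) prv_in_set nxt_in_set by blast+
  ultimately show ?thesis
    using j by (auto simp: full_twist_site_def)
qed

lemma trivial_left_after_reduction:
  assumes "mset c = {#p, 1, q#} + mset rest" "2 \<le> p" "2 \<le> q"
    and "p = 2 \<or> q = 2 \<or> 2 \<le> card (trivial_positions c)"
  shows "1 \<in> set ((p - 1) # (q - 1) # rest)"
proof (cases "p = 2 \<or> q = 2")
  case False
  then have "2 \<le> count (mset c) 1"
    using assms(4) count_1_eq_card_trivial_positions[of c] by simp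
  moreover have "count (mset c) 1 = 1 + count (mset rest) 1"
    using assms(1-3) by simp
  ultimately have "count (mset rest) 1 \<noteq> 0"
    by linarith
  then show ?thesis by simp
qed auto

lemma full_twist_move:
  assumes "even (length c + k)" "4 \<le> length c" "\<forall>x\<in>set c. 1 \<le> x" "full_twist_site c j"
  obtains d where "conj_B3 (twisted_word k c) (twisted_word (Suc (Suc k)) d)" "length d + 2 = length c"
proof -
  let ?p = "prv c j" and ?q = "nxt c j"
  have j: "j < length c" "c ! j = 1" "2 \<le> ?p" "2 \<le> ?q"
    using assms(4) by (auto simp: full_twist_site_def trivial_positions_def)
  have bounds: "3 \<le> length c" "1 \<le> ?p" "1 \<le> ?q"
    using assms(2) j by simp_all
  obtain rest where first: "conj_B3 (twisted_word k c) (twisted_word (Suc k) ((?p - 1) # (?q - 1) # rest))"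
    and ms: "mset c = {#?p, 1, ?q#} + mset rest"
    by (rule conj_B3_twisted_reduce_at[OF assms(1) bounds(1) j(1,2) bounds(2,3)])
  define c1 where "c1 = (?p - 1) # (?q - 1) # rest"
  have len1: "length c1 + 1 = length c"
    using arg_cong[OF ms, of size] by (simp add: c1_def)
  have "set rest \<subseteq> set c"
    using arg_cong[OF ms, of set_mset] by auto
  then have pos1: "\<forall>x\<in>set c1. 1 \<le> x"
    using assms(3) j by (auto simp: c1_def)
  have "1 \<in> set c1"
    unfolding c1_def using trivial_left_after_reduction[OF ms j(3,4)] assms(4)
    by (simp add: full_twist_site_def)
  then obtain j' where j': "j' < length c1" "c1 ! j' = 1"
    by (metis in_set_conv_nth)
  have "c1 \<noteq> []" by (simp add: c1_def)
  then have "1 \<le> prv c1 j'" "1 \<le> nxt c1 j'"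
    using pos1 prv_in_set nxt_in_set by blast+
  moreover have "even (length c1 + Suc k)" "3 \<le> length c1"
    using assms(1,2) len1 by presburger+
  ultimately obtain rest' where
    second: "conj_B3 (twisted_word (Suc k) c1)
               (twisted_word (Suc (Suc k)) ((prv c1 j' - 1) # (nxt c1 j' - 1) # rest'))"
    and ms': "mset c1 = {#prv c1 j', 1, nxt c1 j'#} + mset rest'"
    using j' by (metis conj_B3_twisted_reduce_at)
  have "length ((prv c1 j' - 1) # (nxt c1 j' - 1) # rest') + 2 = length c"
    using arg_cong[OF ms', of size] len1 by simp
  then show ?thesis
    using that conj_B3_trans[OF first[folded c1_def] second] by blast
qed

lemma trivial_after_trivial:
  assumes "j \<in> trivial_positions c" "prv c j = 1"
  shows "\<exists>i<length c. c ! i = 1 \<and> nxt c i = 1"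
proof -
  let ?n = "length c"
  let ?i = "(j + ?n - 1) mod ?n"
  have j: "j < ?n" "c ! j = 1"
    using assms(1) by (auto simp: trivial_positions_def)
  have "(?i + 1) mod ?n = (j + ?n - 1 + 1) mod ?n"
    by (simp add: mod_Suc_eq)
  also have "j + ?n - 1 + 1 = j + ?n"
    using j by simp
  finally have "nxt c ?i = c ! j"
    using j by (simp add: nxt_def)
  moreover have "c ! ?i = 1" "?i < ?n"
    using assms(2) j by (auto simp: prv_def intro: mod_less_divisor)
  ultimately show ?thesis
    using j by auto
qed

lemma trivial_positions_cases:
  assumes "c \<noteq> []" "\<forall>x\<in>set c. 1 \<le> x"
  obtains (sparse) "card (trivial_positions c) \<le> 1"
      "\<forall>j\<in>trivial_positions c. 3 \<le> prv c j \<and> 3 \<le> nxt c j"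
    | (adjacent) j where "j < length c" "c ! j = 1" "nxt c j = 1"
    | (full_twist) j where "full_twist_site c j"
proof (cases "(\<exists>j<length c. c ! j = 1 \<and> nxt c j = 1) \<or> (\<exists>j. full_twist_site c j)")
  case True
  then show ?thesis using adjacent full_twist by blast
next
  case False
  have isolated: "3 \<le> prv c j \<and> 3 \<le> nxt c j \<and> card (trivial_positions c) \<le> 1"
    if j: "j \<in> trivial_positions c" for j
  proof -
    have "prv c j \<noteq> 1"
      using False trivial_after_trivial j by blast
    moreover have "nxt c j \<noteq> 1"
      using False j by (auto simp: trivial_positions_def)
    moreover have "1 \<le> prv c j" "1 \<le> nxt c j"
      using assms prv_in_set nxt_in_set by blast+
    moreover have "\<not> full_twist_site c j"
      using False by blast
    ultimately show ?thesis
      using j unfolding full_twist_site_def by auto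
  qed
  have "card (trivial_positions c) \<le> 1"
    using isolated by (cases "trivial_positions c = {}") auto
  with isolated show ?thesis
    using sparse by blast
qed

section \<open>The normal form\<close>

fun pairs_of :: "nat list \<Rightarrow> (nat \<times> nat) list" where
  "pairs_of (x # y # r) = (x, y) # pairs_of r"
| "pairs_of _ = []"

lemma syl_Nil [simp]: "syl [] = []"
  by (simp add: syl_def)

lemma syl_Cons [simp]: "syl ((x, y) # ps) = x # y # syl ps"
  by (simp add: syl_def)

lemma word_of_Nil [simp]: "word_of [] = []"
  by (simp add: word_of_def)

lemma word_of_Cons [simp]: "word_of ((x, y) # ps) = sig_pow S1 x @ sig_pow S2 y @ word_of ps"
  by (simp add: word_of_def)

lemma word_of_eq_alt_word: "word_of ps = alt_word S1 (syl ps)"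
  by (induction ps) auto

lemma length_syl: "length (syl ps) = 2 * length ps"
  by (induction ps) auto

lemma set_syl: "set (syl ps) = fst ` set ps \<union> snd ` set ps"
  by (induction ps) force+

lemma syl_pairs_of: "even (length c) \<Longrightarrow> syl (pairs_of c) = c"
  by (induction c rule: pairs_of.induct) auto

lemma word_of_pairs_of: "even (length c) \<Longrightarrow> word_of (pairs_of c) = alt_word S1 c"
  by (induction c rule: pairs_of.induct) auto

lemma length_pairs_of: "length (pairs_of c) = length c div 2"
  by (induction c rule: pairs_of.induct) auto

lemma nth_pairs_of: "j < length (pairs_of c) \<Longrightarrow> pairs_of c ! j = (c ! (2 * j), c ! (2 * j + 1))"
proof (induction c arbitrary: j rule: pairs_of.induct)
  case (1 x y r j)
  then show ?case by (cases j) auto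
qed auto

definition normal_form :: "(nat \<times> nat) list \<Rightarrow> bool" where
  "normal_form qs \<longleftrightarrow>
     (\<forall>j. 1 \<le> j \<and> j < length qs \<longrightarrow> fst (qs ! j) \<ge> 2 \<and> snd (qs ! j) \<ge> 2)
   \<and> (length qs \<ge> 2 \<longrightarrow>
        fst (qs ! 0) \<ge> 1 \<and> snd (qs ! 0) \<ge> 1
      \<and> (trivial_syls qs = {}
         \<or> (card (trivial_syls qs) = 1
            \<and> (\<forall>k \<in> trivial_syls qs. prv (syl qs) k \<ge> 3 \<and> nxt (syl qs) k \<ge> 3))))"

lemma normal_form_short: "length qs \<le> 1 \<Longrightarrow> normal_form qs"
  by (simp add: normal_form_def)

lemma normal_form_pairs_of:
  assumes "even (length c)" "\<forall>x\<in>set c. 1 \<le> x" "\<forall>x\<in>set (drop 2 c). 2 \<le> x"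
    and "card (trivial_positions c) \<le> 1" "\<forall>j\<in>trivial_positions c. 3 \<le> prv c j \<and> 3 \<le> nxt c j"
  shows "normal_form (pairs_of c)"
proof -
  let ?qs = "pairs_of c"
  have triv: "trivial_syls ?qs = trivial_positions c"
    using syl_pairs_of[OF assms(1)] by (simp add: trivial_syls_def trivial_positions_def)
  have len: "2 * length ?qs = length c"
    using assms(1) by (simp add: length_pairs_of)
  have tail: "2 \<le> c ! i" if i: "2 \<le> i" "i < length c" for i
  proof -
    obtain i' where "i = 2 + i'"
      using le_Suc_ex[OF i(1)] by blast
    then have "c ! i = drop 2 c ! (i - 2)"
      using i by simp
    also have "\<dots> \<in> set (drop 2 c)"
      using i by (intro nth_mem) simp
    finally show ?thesis
      using assms(3) by blast
  qed
  have "fst (?qs ! j) \<ge> 2 \<and> snd (?qs ! j) \<ge> 2" if "1 \<le> j" "j < length ?qs" for j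
    using nth_pairs_of[OF that(2)] tail that len by simp
  moreover have "fst (?qs ! 0) \<ge> 1 \<and> snd (?qs ! 0) \<ge> 1" if "length ?qs \<ge> 2"
  proof -
    have "0 < length ?qs"
      using that by linarith
    then have "?qs ! 0 = (c ! 0, c ! 1)"
      using nth_pairs_of[of 0 c] by simp
    moreover have "c ! 0 \<in> set c" "c ! 1 \<in> set c"
      using that len by (auto intro!: nth_mem)
    ultimately show ?thesis
      using assms(2) by auto
  qed
  moreover have "trivial_syls ?qs = {} \<or> card (trivial_syls ?qs) = 1"
    using assms(4) finite_trivial_positions[of c] triv by (auto simp: le_Suc_eq)
  ultimately show ?thesis
    using assms(5) syl_pairs_of[OF assms(1)] triv by (simp add: normal_form_def)
qed

lemma normal_form_pairs_of_window:
  assumes "even (length (p # 1 # q # rest))" "3 \<le> p" "3 \<le> q" "\<forall>x\<in>set rest. 2 \<le> x"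
  shows "normal_form (pairs_of (p # 1 # q # rest))"
proof -
  let ?l = "p # 1 # q # rest"
  have "?l ! k \<noteq> 1" if "k < length ?l" "k \<noteq> 1" for k
  proof (cases "k < 3")
    case True
    then have "k = 0 \<or> k = 2"
      using that(2) by auto
    then show ?thesis
      using assms(2,3) by auto
  next
    case False
    then obtain k' where "k = 3 + k'"
      using le_Suc_ex[of 3 k] by auto
    then have "?l ! k \<in> set rest"
      using that(1) by (simp add: numeral_3_eq_3)
    then show ?thesis
      using assms(4) by fastforce
  qed
  then have "trivial_positions ?l = {1}"
    by (auto simp: trivial_positions_def)
  moreover have "prv ?l 1 = p" "nxt ?l 1 = q"
    by (simp_all add: prv_def nxt_def)
  ultimately show ?thesis
    using assms by (intro normal_form_pairs_of) auto
qed

lemma sparse_trivials_normal_form: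
  assumes "even (length c)" "3 \<le> length c" "\<forall>x\<in>set c. 1 \<le> x"
    and "card (trivial_positions c) \<le> 1" "\<forall>j\<in>trivial_positions c. 3 \<le> prv c j \<and> 3 \<le> nxt c j"
  obtains qs where "conj_B3 (alt_word S1 c) (word_of qs)" "2 * length qs = length c" "normal_form qs"
proof (cases "trivial_positions c = {}")
  case True
  then have "\<forall>x\<in>set c. 2 \<le> x"
    using assms(3) by (force simp: trivial_positions_def in_set_conv_nth)
  then have "normal_form (pairs_of c)"
    using assms True by (intro normal_form_pairs_of) (auto dest: in_set_dropD)
  then show ?thesis
    using that[of "pairs_of c"] assms(1) by (simp add: word_of_pairs_of length_pairs_of conj_B3_refl)
next
  case False
  then obtain j where j: "j \<in> trivial_positions c" by blast
  let ?p = "prv c j" and ?q = "nxt c j"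
  obtain m rest where e: "rotate m c = ?p # 1 # ?q # rest"
    using rotate_window[of j c] j assms(2) by (force simp: trivial_positions_def)
  have "card (trivial_positions c) = 1"
    using assms(4) False finite_trivial_positions[of c] by (simp add: le_Suc_eq)
  then have "count (mset c) 1 = 1"
    by (metis count_1_eq_card_trivial_positions)
  moreover have "3 \<le> ?p" "3 \<le> ?q"
    using j assms(5) by auto
  then have "count (mset (rotate m c)) 1 = 1 + count (mset rest) 1"
    by (simp add: e)
  then have "count (mset c) 1 = 1 + count (mset rest) 1"
    by (simp only: mset_rotate)
  ultimately have "1 \<notin> set rest"
    using count_mset_0_iff[of rest 1] by simp
  moreover have "set rest \<subseteq> set c"
    using set_rotate[of m c] by (auto simp: e)
  ultimately have rest: "\<forall>x\<in>set rest. 2 \<le> x"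
    using assms(3) by (metis One_nat_def Suc_1 Suc_leI le_neq_implies_less subsetD)
  have "length (rotate m c) = length c"
    by simp
  then have "normal_form (pairs_of (rotate m c))"
    using normal_form_pairs_of_window[of ?p ?q rest] j assms(1,5) rest by (simp add: e)
  moreover have "conj_B3 (alt_word S1 c) (alt_word S1 (rotate m c))"
    using conj_B3_twisted_rotate[of c 0 m] assms(1) by simp
  ultimately show ?thesis
    using that[of "pairs_of (rotate m c)"] assms(1) by (simp add: word_of_pairs_of length_pairs_of)
qed

lemma conj_B3_twisted_2:
  assumes "conj_B3 (alt_word S1 d) (delta13_pow (3 * a) @ word_of qs)"
  shows "conj_B3 (twisted_word 2 d) (delta13_pow (3 * Suc a) @ word_of qs)"
proof -
  have "twisted_word 2 d = (half_twist @ half_twist) @ alt_word S1 d"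
    by (simp add: twisted_word_def half_twist_pow_def numeral_2_eq_2)
  also have "beq \<dots> (delta13_pow 3 @ alt_word S1 d)"
    by (rule beq_append_right[OF beq_sym[OF beq_delta13_pow_3]])
  finally have "conj_B3 (twisted_word 2 d) (delta13_pow 3 @ alt_word S1 d)"
    by (rule conj_B3_if_beq)
  also have "conj_B3 \<dots> (delta13_pow 3 @ delta13_pow (3 * a) @ word_of qs)"
    by (rule conj_B3_prefix_central[OF beq_delta13_pow_3_commute assms])
  finally show ?thesis
    by (simp only: delta13_pow_3_Suc append_assoc)
qed

lemma reduction_step:
  assumes "even (length c)" "4 \<le> length c"
  obtains (normal) qs where "conj_B3 (alt_word S1 c) (word_of qs)" "2 * length qs = length c"
      "normal_form qs"
    | (shorter) d where "conj_B3 (alt_word S1 c) (alt_word S1 d)" "length d + 2 = length c"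
    | (full_twist) d where "conj_B3 (alt_word S1 c) (twisted_word 2 d)" "length d + 2 = length c"
proof (cases "0 \<in> set c")
  case True
  then show ?thesis
    using zero_merge_move[of c 0] shorter assms by force
next
  case False
  then have pos: "\<forall>x\<in>set c. 1 \<le> x"
    by (metis less_one not_le)
  have "c \<noteq> []"
    using assms(2) by auto
  from this pos show ?thesis
  proof (cases rule: trivial_positions_cases)
    case sparse
    then show ?thesis
      using sparse_trivials_normal_form[of c] normal assms pos by force
  next
    case (adjacent j)
    then show ?thesis
      using adjacent_trivials_move[of c 0 j] shorter assms by force
  next
    case (full_twist j)
    then show ?thesis
      using full_twist_move[of c 0 j] that(3) assms pos by (force simp: numeral_2_eq_2)
  qed
qed

lemma normal_form_exists:
  assumes "even (length c)"
  shows "\<exists>a qs. conj_B3 (alt_word S1 c) (delta13_pow (3 * a) @ word_of qs)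
                \<and> 2 * length qs \<le> length c \<and> normal_form qs"
  using assms
proof (induction "length c" arbitrary: c rule: less_induct)
  case less
  have from_shorter: "\<exists>a qs. conj_B3 (alt_word S1 d) (delta13_pow (3 * a) @ word_of qs)
                        \<and> 2 * length qs \<le> length c \<and> normal_form qs"
    if "length d + 2 = length c" for d
  proof -
    have "even (length d)"
      using that less.prems by presburger
    then show ?thesis
      using less.hyps[of d] that by fastforce
  qed
  have "length c \<le> 2 \<or> 4 \<le> length c"
    using less.prems by (auto elim!: evenE)
  then show ?case
  proof
    assume "length c \<le> 2"
    then show ?thesis
      using less.prems normal_form_short[of "pairs_of c"]
      by (intro exI[of _ 0] exI[of _ "pairs_of c"])
         (simp add: delta13_pow_def word_of_pairs_of length_pairs_of conj_B3_refl)
  next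
    assume "4 \<le> length c"
    with less.prems show ?thesis
    proof (cases rule: reduction_step)
      case (normal qs)
      then show ?thesis
        by (intro exI[of _ 0] exI[of _ qs]) (simp add: delta13_pow_def)
    next
      case (shorter d)
      then show ?thesis
        using from_shorter conj_B3_trans by blast
    next
      case (full_twist d)
      then obtain a qs where "conj_B3 (alt_word S1 d) (delta13_pow (3 * a) @ word_of qs)"
          "2 * length qs \<le> length c" "normal_form qs"
        using from_shorter by blast
      with full_twist show ?thesis
        using conj_B3_twisted_2 conj_B3_trans by blast
    qed
  qed
qed

lemma reduction_of_exponents:
  assumes "even (length c)" "4 \<le> length c" "\<forall>x\<in>set c. 1 \<le> x"
    and "2 \<le> card (trivial_positions c) \<or> (\<exists>j. full_twist_site c j)"
  obtains a qs where "conj_B3 (alt_word S1 c) (delta13_pow (3 * a) @ word_of qs)"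
    "2 * length qs + 2 \<le> length c" "normal_form qs" "(\<exists>j. full_twist_site c j) \<longrightarrow> 1 \<le> a"
proof (cases "\<exists>j. full_twist_site c j")
  case True
  then obtain j where "full_twist_site c j" ..
  moreover have "even (length c + 0)"
    using assms(1) by simp
  ultimately obtain d where d: "conj_B3 (alt_word S1 c) (twisted_word 2 d)" "length d + 2 = length c"
    using full_twist_move[of c 0 j] assms(2,3) by (auto simp: numeral_2_eq_2)
  have "even (length d)"
    using d(2) assms(1) by presburger
  then obtain a qs where "conj_B3 (alt_word S1 d) (delta13_pow (3 * a) @ word_of qs)"
      "2 * length qs \<le> length d" "normal_form qs"
    using normal_form_exists by blast
  with d show ?thesis
    using that[of "Suc a" qs] conj_B3_trans conj_B3_twisted_2 by simp
next
  case False
  then have card: "2 \<le> card (trivial_positions c)"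
    using assms(4) by blast
  have "c \<noteq> []"
    using assms(2) by auto
  then obtain j where "j < length c" "c ! j = 1" "nxt c j = 1"
    using assms(3) by (cases rule: trivial_positions_cases) (use False card in auto)
  moreover have "even (length c + 0)"
    using assms(1) by simp
  ultimately obtain d where d: "conj_B3 (alt_word S1 c) (alt_word S1 d)" "length d + 2 = length c"
    using adjacent_trivials_move[of c 0 j] assms(2) by auto
  have "even (length d)"
    using d(2) assms(1) by presburger
  then obtain a qs where "conj_B3 (alt_word S1 d) (delta13_pow (3 * a) @ word_of qs)"
      "2 * length qs \<le> length d" "normal_form qs"
    using normal_form_exists by blast
  with d show ?thesis
    using that[of a qs] False conj_B3_trans by simp
qed

theorem proposition2p8:
  fixes ps :: "(nat \<times> nat) list"
  assumes r2: "length ps \<ge> 2"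
    and pos: "\<forall>(x, y) \<in> set ps. x \<ge> 1 \<and> y \<ge> 1"
    and hyp: "card (trivial_syls ps) \<ge> 2 \<or>
              (\<exists>k \<in> trivial_syls ps. min (prv (syl ps) k) (nxt (syl ps) k) = 2)"
  shows "\<exists>(a::nat) (qs :: (nat \<times> nat) list).
           length qs < length ps
         \<and> conj_B3 (word_of ps) (delta13_pow (3 * a) @ word_of qs)
         \<and> (((\<exists>k \<in> trivial_syls ps. min (prv (syl ps) k) (nxt (syl ps) k) = 2)
              \<or> card (isolated_trivial_syls ps) \<ge> 2) \<longrightarrow> a \<ge> 1)
         \<and> (\<forall>j. 1 \<le> j \<and> j < length qs \<longrightarrow> fst (qs ! j) \<ge> 2 \<and> snd (qs ! j) \<ge> 2)
         \<and> (length qs \<ge> 2 \<longrightarrow>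
              fst (qs ! 0) \<ge> 1 \<and> snd (qs ! 0) \<ge> 1
            \<and> (trivial_syls qs = {}
               \<or> (card (trivial_syls qs) = 1
                  \<and> (\<forall>k \<in> trivial_syls qs. prv (syl qs) k \<ge> 3 \<and> nxt (syl qs) k \<ge> 3))))"
proof -
  let ?e = "syl ps"
  have len: "length ?e = 2 * length ps"
    by (rule length_syl)
  have e: "even (length ?e)" "4 \<le> length ?e" "\<forall>x\<in>set ?e. 1 \<le> x"
    using len r2 pos by (auto simp: set_syl)
  have triv: "trivial_syls ps = trivial_positions ?e"
    by (simp add: trivial_syls_def trivial_positions_def)
  have iso: "isolated_trivial_syls ps = {k \<in> trivial_positions ?e. prv ?e k \<noteq> 1 \<and> nxt ?e k \<noteq> 1}"
    by (simp add: isolated_trivial_syls_def triv)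
  have strong_site: "\<exists>j. full_twist_site ?e j"
    if "(\<exists>k \<in> trivial_syls ps. min (prv ?e k) (nxt ?e k) = 2) \<or> card (isolated_trivial_syls ps) \<ge> 2"
    using that e(3) full_twist_site_if_min_2 full_twist_site_if_isolated unfolding triv iso by blast
  have "2 \<le> card (trivial_positions ?e) \<or> (\<exists>j. full_twist_site ?e j)"
    using hyp full_twist_site_if_min_2 unfolding triv by blast
  then obtain a qs where "conj_B3 (alt_word S1 ?e) (delta13_pow (3 * a) @ word_of qs)"
      "2 * length qs + 2 \<le> length ?e" "normal_form qs" "(\<exists>j. full_twist_site ?e j) \<longrightarrow> 1 \<le> a"
    by (rule reduction_of_exponents[OF e])
  then show ?thesis
    using len strong_site unfolding word_of_eq_alt_word[of ps] normal_form_def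
    by (intro exI[of _ a] exI[of _ qs]) auto
qed

end
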